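(* For every integer $s\ge0$ there is a positive constant $C$ such that for every smooth function $\psi$ on $\mathbb{R}\times\mathbb{R}^2$, $$|\Gamma\psi(t,x)|_s\le C|x|\,|\psi(t,x)|_{Z,s}+C\langle t-|x|\rangle|\partial\psi(t,x)|_s$$ for all $(t,x)$ with $x\ne0$.
   Context: $\partial_0=\partial_t$, $\partial_j=\partial/\partial x_j$; $\partial\psi=(\partial_0\psi,\partial_1\psi,\partial_2\psi)$. $S=t\partial_t+x_1\partial_1+x_2\partial_2$, $L_j=t\partial_j+x_j\partial_t$ ($j=1,2$), $\Omega=x_1\partial_2-x_2\partial_1$, $\Gamma=(\Gamma_0,\dots,\Gamma_6)=(S,L_1,L_2,\Omega,\partial_0,\partial_1,\partial_2)$, $\Gamma^\alpha=\Gamma_0^{\alpha_0}\cdots\Gamma_6^{\alpha_6}$, $|\phi|_s=\sum_{|\alpha|\le s}|\Gamma^\alpha\phi|$ (for vector-valued $\phi$ such as $\Gamma\psi$ or $\partial\psi$, sum of absolute values of components). $Z_k=\frac{x_k}{|x|}\partial_t+\partial_k$ ($k=1,2$, $x\ne0$), and $|\psi(t,x)|_{Z,s}=\sum_{k=1}^2\sum_{|\alpha|\le s}|Z_k\Gamma^\alpha\psi(t,x)|$. $\langle y\rangle=(1+|y|^2)^{1/2}$. *)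

theory Defs
  imports "HOL-Analysis.Analysis"
begin

type_synonym pt = "real \<times> real \<times> real"

definition dirv :: "nat \<Rightarrow> pt" where
  "dirv i = (if i = 0 then (1,0,0) else if i = 1 then (0,1,0) else (0,0,1))"

text \<open>Partial derivative in coordinate i (0 = t, 1 = x1, 2 = x2).\<close>
definition pd :: "nat \<Rightarrow> (pt \<Rightarrow> real) \<Rightarrow> (pt \<Rightarrow> real)" where
  "pd i f p = deriv (\<lambda>h. f (p + h *\<^sub>R dirv i)) 0"

fun iter_pd :: "nat list \<Rightarrow> (pt \<Rightarrow> real) \<Rightarrow> (pt \<Rightarrow> real)" where
  "iter_pd [] f = f"
| "iter_pd (i # is) f = pd i (iter_pd is f)"

definition smooth3 :: "(pt \<Rightarrow> real) \<Rightarrow> bool" where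
  "smooth3 f \<longleftrightarrow> (\<forall>is. set is \<subseteq> {0,1,2} \<longrightarrow>
                     (\<forall>p. iter_pd is f differentiable (at p)))"

definition tco :: "pt \<Rightarrow> real" where "tco p = fst p"
definition x1co :: "pt \<Rightarrow> real" where "x1co p = fst (snd p)"
definition x2co :: "pt \<Rightarrow> real" where "x2co p = snd (snd p)"
definition xnorm :: "pt \<Rightarrow> real" where "xnorm p = sqrt ((x1co p)\<^sup>2 + (x2co p)\<^sup>2)"

text \<open>The vector fields Gamma_0..Gamma_6 = S, L1, L2, Omega, d_0, d_1, d_2.\<close>
definition Gam :: "nat \<Rightarrow> (pt \<Rightarrow> real) \<Rightarrow> (pt \<Rightarrow> real)" where
  "Gam k f = (\<lambda>p.
     if k = 0 then tco p * pd 0 f p + x1co p * pd 1 f p + x2co p * pd 2 f p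
     else if k = 1 then tco p * pd 1 f p + x1co p * pd 0 f p
     else if k = 2 then tco p * pd 2 f p + x2co p * pd 0 f p
     else if k = 3 then x1co p * pd 2 f p - x2co p * pd 1 f p
     else if k = 4 then pd 0 f p
     else if k = 5 then pd 1 f p
     else pd 2 f p)"

definition multi :: "nat \<Rightarrow> (nat \<Rightarrow> nat) set" where
  "multi s = {\<alpha>. (\<forall>k\<ge>7. \<alpha> k = 0) \<and> (\<Sum>k<7. \<alpha> k) \<le> s}"

definition GamA :: "(nat \<Rightarrow> nat) \<Rightarrow> (pt \<Rightarrow> real) \<Rightarrow> (pt \<Rightarrow> real)" where
  "GamA \<alpha> f = foldr (\<lambda>k g. (Gam k ^^ \<alpha> k) g) [0..<7] f"

definition normS :: "nat \<Rightarrow> (pt \<Rightarrow> real) \<Rightarrow> pt \<Rightarrow> real" where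
  "normS s f p = (\<Sum>\<alpha>\<in>multi s. \<bar>GamA \<alpha> f p\<bar>)"

definition GamNormS :: "nat \<Rightarrow> (pt \<Rightarrow> real) \<Rightarrow> pt \<Rightarrow> real" where
  "GamNormS s f p = (\<Sum>j<7. normS s (Gam j f) p)"

definition DNormS :: "nat \<Rightarrow> (pt \<Rightarrow> real) \<Rightarrow> pt \<Rightarrow> real" where
  "DNormS s f p = (\<Sum>j<3. normS s (pd j f) p)"

definition Zf :: "nat \<Rightarrow> (pt \<Rightarrow> real) \<Rightarrow> (pt \<Rightarrow> real)" where
  "Zf k f = (\<lambda>p. (if k = 1 then x1co p else x2co p) / xnorm p * pd 0 f p + pd k f p)"

definition ZNormS :: "nat \<Rightarrow> (pt \<Rightarrow> real) \<Rightarrow> pt \<Rightarrow> real" where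
  "ZNormS s f p = (\<Sum>k\<in>{1,2}. \<Sum>\<alpha>\<in>multi s. \<bar>Zf k (GamA \<alpha> f) p\<bar>)"

definition jbr :: "real \<Rightarrow> real" where "jbr y = sqrt (1 + y\<^sup>2)"

end

theory Submission
  imports Defs
begin

text \<open>With \<open>r = |x|\<close> one has \<open>S = (t - r)\<partial>\<^sub>t + x\<^sub>1Z\<^sub>1 + x\<^sub>2Z\<^sub>2\<close>, \<open>L\<^sub>j = (t - r)\<partial>\<^sub>j + rZ\<^sub>j\<close> and
  \<open>\<Omega> = x\<^sub>1Z\<^sub>2 - x\<^sub>2Z\<^sub>1\<close>, which gives the estimate for a single field \<open>\<Gamma>\<^sub>k\<close>. For higher order,
  the commutators \<open>[\<Gamma>\<^sub>a, \<Gamma>\<^sub>b]\<close> are constant multiples of single fields, so by reordering,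
  \<open>\<Gamma>\<^sup>\<alpha>\<Gamma>\<^sub>j\<psi>\<close> is a combination, with coefficients independent of \<open>\<psi>\<close>, of ordered
  \<open>\<Gamma>\<^sup>\<beta>\<psi> = \<Gamma>\<^sub>k\<Gamma>\<^bsup>\<beta>'\<^esup>\<psi>\<close> with \<open>|\<beta>'| \<le> s\<close>. The single-field estimate applied to \<open>\<Gamma>\<^bsup>\<beta>'\<^esup>\<psi>\<close>
  leaves \<open>\<partial>\<Gamma>\<^bsup>\<beta>'\<^esup>\<psi>\<close>, which is a combination of the \<open>\<Gamma>\<^sup>\<gamma>\<partial>\<psi>\<close>, \<open>|\<gamma>| \<le> |\<beta>'|\<close>, because
  \<open>[\<partial>, \<Gamma>\<^sub>k]\<close> is a constant-coefficient combination of derivatives. Finitely many multi-indices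
  occur, so the constants are uniform.\<close>

section \<open>Partial derivatives and smooth functions\<close>

lemma has_real_derivative_along:
  assumes "f differentiable (at (P + u *\<^sub>R v))"
  shows "((\<lambda>h. f (P + h *\<^sub>R v)) has_real_derivative frechet_derivative f (at (P + u *\<^sub>R v)) v) (at u)"
proof -
  let ?F = "frechet_derivative f (at (P + u *\<^sub>R v))"
  have F: "(f has_derivative ?F) (at (P + u *\<^sub>R v))"
    using assms frechet_derivative_works by blast
  have "((\<lambda>h. P + h *\<^sub>R v) has_derivative (\<lambda>h. h *\<^sub>R v)) (at u)"
    by (auto intro!: derivative_eq_intros)
  from has_derivative_compose[OF this F]
  have "((\<lambda>h. f (P + h *\<^sub>R v)) has_derivative (\<lambda>h. h * ?F v)) (at u)"
    using linear_cmul[OF has_derivative_linear[OF F]] by (simp add: o_def)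
  moreover have "(\<lambda>h. h * ?F v) = (*) (?F v)" by (auto simp: fun_eq_iff)
  ultimately show ?thesis
    by (simp add: has_field_derivative_def)
qed

lemma pd_eq_frechet_derivative:
  assumes "f differentiable (at P)"
  shows "pd i f P = frechet_derivative f (at P) (dirv i)"
  unfolding pd_def using has_real_derivative_along[of f P 0 "dirv i"] assms
  by (simp add: DERIV_imp_deriv)

lemma pd_has_real_derivative_along:
  assumes "f differentiable (at (P + u *\<^sub>R dirv i))"
  shows "((\<lambda>h. f (P + h *\<^sub>R dirv i)) has_real_derivative pd i f (P + u *\<^sub>R dirv i)) (at u)"
  using has_real_derivative_along[OF assms] pd_eq_frechet_derivative[OF assms] by simp

lemma pd_has_real_derivative_at_0:
  assumes "f differentiable (at P)"
  shows "((\<lambda>h. f (P + h *\<^sub>R dirv i)) has_real_derivative pd i f P) (at 0)"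
  using pd_has_real_derivative_along[of f P 0 i] assms by simp

lemma pd_add:
  assumes "f differentiable (at P)" "g differentiable (at P)"
  shows "pd i (\<lambda>q. f q + g q) P = pd i f P + pd i g P"
  unfolding pd_def[of i "\<lambda>q. f q + g q"]
  by (intro DERIV_imp_deriv DERIV_add pd_has_real_derivative_at_0 assms)

lemma pd_cmult:
  assumes "f differentiable (at P)"
  shows "pd i (\<lambda>q. c * f q) P = c * pd i f P"
  unfolding pd_def[of i "\<lambda>q. c * f q"]
  by (intro DERIV_imp_deriv DERIV_cmult pd_has_real_derivative_at_0 assms)

lemma pd_mult:
  assumes "f differentiable (at P)" "g differentiable (at P)"
  shows "pd i (\<lambda>q. f q * g q) P = pd i f P * g P + f P * pd i g P"
  unfolding pd_def[of i "\<lambda>q. f q * g q"]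
  using DERIV_mult[OF pd_has_real_derivative_at_0[OF assms(1)] pd_has_real_derivative_at_0[OF assms(2)]]
  by (simp add: DERIV_imp_deriv mult.commute)

lemma pd_const: "pd i (\<lambda>q. c) = (\<lambda>q. 0)"
  unfolding pd_def by (simp add: fun_eq_iff)

lemma pd_eq_pd2: "2 \<le> i \<Longrightarrow> pd i = pd 2"
  by (auto simp: fun_eq_iff pd_def dirv_def)

lemma pd_sum:
  assumes "finite A" "\<And>x. x \<in> A \<Longrightarrow> F x differentiable (at P)"
  shows "pd i (\<lambda>q. \<Sum>x\<in>A. c x * F x q) P = (\<Sum>x\<in>A. c x * pd i (F x) P)"
  using assms
proof (induction A rule: finite_induct)
  case empty
  then show ?case by (simp add: pd_const)
next
  case (insert x A)
  have "(\<lambda>q. \<Sum>y\<in>A. c y * F y q) differentiable (at P)"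
    using insert by (intro differentiable_sum differentiable_mult) auto
  then show ?case
    using insert by (simp add: pd_add pd_cmult differentiable_mult)
qed

definition affine3 :: "real \<Rightarrow> real \<Rightarrow> real \<Rightarrow> real \<Rightarrow> pt \<Rightarrow> real" where
  "affine3 a b c d p = a * tco p + b * x1co p + c * x2co p + d"

lemma differentiable_affine3: "affine3 a b c d differentiable (at P)"
proof -
  have "(affine3 a b c d has_derivative (\<lambda>p. a * fst p + b * fst (snd p) + c * snd (snd p))) (at P)"
    unfolding affine3_def tco_def x1co_def x2co_def by (auto intro!: derivative_eq_intros)
  then show ?thesis unfolding differentiable_def by blast
qed

lemma pd_affine3: "pd i (affine3 a b c d) P = (if i = 0 then a else if i = 1 then b else c)"
proof -
  let ?L = "if i = 0 then a else if i = 1 then b else c"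
  have "(\<lambda>h. affine3 a b c d (P + h *\<^sub>R dirv i)) = (\<lambda>h. affine3 a b c d P + h * ?L)"
    by (auto simp: fun_eq_iff affine3_def dirv_def tco_def x1co_def x2co_def algebra_simps)
  moreover have "((\<lambda>h. affine3 a b c d P + h * ?L) has_real_derivative ?L) (at 0)"
    by (auto intro!: derivative_eq_intros)
  ultimately show ?thesis unfolding pd_def by (simp add: DERIV_imp_deriv)
qed

lemma iter_pd_append: "iter_pd (ks @ js) f = iter_pd ks (iter_pd js f)"
  by (induction ks) auto

lemma smooth3_iter_pd_differentiable:
  "smooth3 f \<Longrightarrow> set js \<subseteq> {0,1,2} \<Longrightarrow> iter_pd js f differentiable (at p)"
  unfolding smooth3_def by blast

lemma smooth3_differentiable: "smooth3 f \<Longrightarrow> f differentiable (at p)"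
  using smooth3_iter_pd_differentiable[of f "[]"] by simp

lemma smooth3_iter_pd: "smooth3 f \<Longrightarrow> set js \<subseteq> {0,1,2} \<Longrightarrow> smooth3 (iter_pd js f)"
  unfolding smooth3_def by (metis iter_pd_append set_append sup.bounded_iff)

lemma smooth3_pd: "smooth3 f \<Longrightarrow> smooth3 (pd i f)"
proof -
  assume f: "smooth3 f"
  have "pd i = pd (min i 2)" using pd_eq_pd2[of i] by (cases "2 \<le> i") simp_all
  moreover have "set [min i 2] \<subseteq> {0,1,2}" by auto
  ultimately show ?thesis using smooth3_iter_pd[OF f] by (metis iter_pd.simps)
qed

lemma iter_pd_add:
  "smooth3 f \<Longrightarrow> smooth3 g \<Longrightarrow> set js \<subseteq> {0,1,2} \<Longrightarrow>
   iter_pd js (\<lambda>q. f q + g q) = (\<lambda>q. iter_pd js f q + iter_pd js g q)"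
proof (induction js)
  case (Cons i js)
  have s: "set js \<subseteq> {0,1,2}" using Cons.prems by simp
  with Cons have "iter_pd js (\<lambda>q. f q + g q) = (\<lambda>q. iter_pd js f q + iter_pd js g q)" by simp
  with Cons.prems show ?case
    by (simp add: pd_add smooth3_iter_pd_differentiable[OF _ s] ext)
qed simp

lemma smooth3_add: "smooth3 f \<Longrightarrow> smooth3 g \<Longrightarrow> smooth3 (\<lambda>q. f q + g q)"
  unfolding smooth3_def[of "\<lambda>q. f q + g q"]
  by (auto simp: iter_pd_add intro!: differentiable_add smooth3_iter_pd_differentiable)

lemma iter_pd_cmult:
  "smooth3 f \<Longrightarrow> set js \<subseteq> {0,1,2} \<Longrightarrow> iter_pd js (\<lambda>q. c * f q) = (\<lambda>q. c * iter_pd js f q)"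
proof (induction js)
  case (Cons i js)
  have s: "set js \<subseteq> {0,1,2}" using Cons.prems by simp
  with Cons have "iter_pd js (\<lambda>q. c * f q) = (\<lambda>q. c * iter_pd js f q)" by simp
  with Cons.prems show ?case
    by (simp add: pd_cmult smooth3_iter_pd_differentiable[OF _ s] ext)
qed simp

lemma smooth3_cmult: "smooth3 f \<Longrightarrow> smooth3 (\<lambda>q. c * f q)"
  unfolding smooth3_def[of "\<lambda>q. c * f q"]
  by (auto simp: iter_pd_cmult intro!: differentiable_mult smooth3_iter_pd_differentiable)

lemma iter_pd_affine3_mult:
  assumes "set js \<subseteq> {0,1,2}" "smooth3 f"
  shows "\<exists>g. smooth3 g \<and>
    iter_pd js (\<lambda>q. affine3 a b c d q * f q) = (\<lambda>q. affine3 a b c d q * iter_pd js f q + g q)"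
  using assms
proof (induction js)
  case Nil
  have "smooth3 (\<lambda>q. 0 * f q)" using Nil.prems(2) by (rule smooth3_cmult)
  then show ?case by (intro exI[of _ "\<lambda>q. 0"]) simp
next
  case (Cons i js)
  then obtain g where g: "smooth3 g"
    "iter_pd js (\<lambda>q. affine3 a b c d q * f q) = (\<lambda>q. affine3 a b c d q * iter_pd js f q + g q)"
    by auto
  let ?h = "iter_pd js f" and ?L = "if i = 0 then a else if i = 1 then b else c"
  have h: "smooth3 ?h" using Cons.prems by (intro smooth3_iter_pd) auto
  have "pd i (\<lambda>q. affine3 a b c d q * ?h q + g q) =
      (\<lambda>q. affine3 a b c d q * pd i ?h q + (?L * ?h q + pd i g q))"
    using h g(1)
    by (auto simp: fun_eq_iff pd_add pd_mult pd_affine3 differentiable_affine3 smooth3_differentiable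
        intro!: differentiable_mult)
  moreover have "smooth3 (\<lambda>q. ?L * ?h q + pd i g q)"
    by (intro smooth3_add smooth3_cmult smooth3_pd h g)
  ultimately show ?case unfolding iter_pd.simps g(2) by blast
qed

lemma smooth3_affine3_mult: "smooth3 f \<Longrightarrow> smooth3 (\<lambda>q. affine3 a b c d q * f q)"
  unfolding smooth3_def[of "\<lambda>q. affine3 a b c d q * f q"]
proof (intro allI impI)
  fix js :: "nat list" and p
  assume f: "smooth3 f" and s: "set js \<subseteq> {0,1,2}"
  obtain g where "smooth3 g"
    "iter_pd js (\<lambda>q. affine3 a b c d q * f q) = (\<lambda>q. affine3 a b c d q * iter_pd js f q + g q)"
    using iter_pd_affine3_mult[OF s f] by blast
  then show "iter_pd js (\<lambda>q. affine3 a b c d q * f q) differentiable at p"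
    by (simp add: differentiable_add differentiable_mult differentiable_affine3
        smooth3_iter_pd_differentiable[OF f s] smooth3_differentiable)
qed

section \<open>Symmetry of second derivatives\<close>

lemma second_difference_mvt:
  assumes f: "smooth3 f" and h: "0 < h"
  shows "\<exists>\<xi> \<eta>. 0 < \<xi> \<and> \<xi> < h \<and> 0 < \<eta> \<and> \<eta> < h \<and>
     f (p + h *\<^sub>R dirv i + h *\<^sub>R dirv j) - f (p + h *\<^sub>R dirv i) - f (p + h *\<^sub>R dirv j) + f p
       = h * (h * pd j (pd i f) (p + \<xi> *\<^sub>R dirv i + \<eta> *\<^sub>R dirv j))"
proof -
  let ?u = "dirv i" and ?v = "dirv j"
  define \<phi> where "\<phi> s = f (p + h *\<^sub>R ?v + s *\<^sub>R ?u) - f (p + s *\<^sub>R ?u)" for s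
  have "DERIV \<phi> s :> pd i f (p + h *\<^sub>R ?v + s *\<^sub>R ?u) - pd i f (p + s *\<^sub>R ?u)" for s
    unfolding \<phi>_def by (intro DERIV_diff pd_has_real_derivative_along smooth3_differentiable f)
  from MVT2[OF h this] obtain \<xi> where \<xi>: "0 < \<xi>" "\<xi> < h"
    "\<phi> h - \<phi> 0 = h * (pd i f (p + h *\<^sub>R ?v + \<xi> *\<^sub>R ?u) - pd i f (p + \<xi> *\<^sub>R ?u))"
    by auto
  define \<theta> where "\<theta> w = pd i f (p + \<xi> *\<^sub>R ?u + w *\<^sub>R ?v)" for w
  have "DERIV \<theta> w :> pd j (pd i f) (p + \<xi> *\<^sub>R ?u + w *\<^sub>R ?v)" for w
    unfolding \<theta>_def by (intro pd_has_real_derivative_along smooth3_differentiable smooth3_pd f)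
  from MVT2[OF h this] obtain \<eta> where \<eta>: "0 < \<eta>" "\<eta> < h"
    "\<theta> h - \<theta> 0 = h * pd j (pd i f) (p + \<xi> *\<^sub>R ?u + \<eta> *\<^sub>R ?v)"
    by auto
  have "f (p + h *\<^sub>R ?u + h *\<^sub>R ?v) - f (p + h *\<^sub>R ?u) - f (p + h *\<^sub>R ?v) + f p = \<phi> h - \<phi> 0"
    unfolding \<phi>_def by (simp add: algebra_simps)
  also have "\<dots> = h * (\<theta> h - \<theta> 0)"
    using \<xi>(3) unfolding \<theta>_def by (simp add: algebra_simps)
  finally show ?thesis using \<xi> \<eta> by auto
qed

lemma tendsto_at_right_0_between:
  fixes X Y :: "real \<Rightarrow> real" and p u v :: "'a::real_normed_vector"
  assumes "\<And>h. 0 < h \<Longrightarrow> 0 < X h \<and> X h < h \<and> 0 < Y h \<and> Y h < h"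
  shows "((\<lambda>h. p + X h *\<^sub>R u + Y h *\<^sub>R v) \<longlongrightarrow> p) (at_right 0)"
proof -
  have "(F \<longlongrightarrow> 0) (at_right 0)" if "\<And>h. 0 < h \<Longrightarrow> 0 < F h \<and> F h < h" for F :: "real \<Rightarrow> real"
  proof (rule tendsto_sandwich[of "\<lambda>_. 0" F _ "\<lambda>h. h"])
    show "\<forall>\<^sub>F h in at_right 0. 0 \<le> F h" "\<forall>\<^sub>F h in at_right 0. F h \<le> h"
      using eventually_at_right_less[of "0::real"] by (auto elim!: eventually_mono dest: that)
  qed (auto intro: tendsto_ident_at)
  then have X: "(X \<longlongrightarrow> 0) (at_right 0)" and Y: "(Y \<longlongrightarrow> 0) (at_right 0)"
    using assms by blast+
  from tendsto_add[OF tendsto_add[OF tendsto_const tendsto_scaleR[OF X tendsto_const]]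
      tendsto_scaleR[OF Y tendsto_const]]
  have "((\<lambda>h. p + X h *\<^sub>R u + Y h *\<^sub>R v) \<longlongrightarrow> p + 0 *\<^sub>R u + 0 *\<^sub>R v) (at_right 0)" .
  then show ?thesis by simp
qed

text \<open>Both mixed partials are limits of the same second difference quotient.\<close>
lemma pd_commute:
  assumes f: "smooth3 f"
  shows "pd j (pd i f) p = pd i (pd j f) p"
proof -
  let ?q = "\<lambda>X Y u v h. p + X h *\<^sub>R dirv u + Y h *\<^sub>R dirv v"
  let ?\<Delta> = "\<lambda>h. f (p + h *\<^sub>R dirv i + h *\<^sub>R dirv j) - f (p + h *\<^sub>R dirv i) - f (p + h *\<^sub>R dirv j) + f p"
  have "\<forall>h. \<exists>\<xi> \<eta>. 0 < h \<longrightarrow> 0 < \<xi> \<and> \<xi> < h \<and> 0 < \<eta> \<and> \<eta> < h \<and>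
      ?\<Delta> h = h * (h * pd j (pd i f) (p + \<xi> *\<^sub>R dirv i + \<eta> *\<^sub>R dirv j))"
    using second_difference_mvt[OF f] by blast
  then obtain X Y where XY: "\<And>h. 0 < h \<Longrightarrow> 0 < X h \<and> X h < h \<and> 0 < Y h \<and> Y h < h \<and>
      ?\<Delta> h = h * (h * pd j (pd i f) (?q X Y i j h))"
    by metis
  have "\<forall>h. \<exists>\<xi> \<eta>. 0 < h \<longrightarrow> 0 < \<xi> \<and> \<xi> < h \<and> 0 < \<eta> \<and> \<eta> < h \<and>
      ?\<Delta> h = h * (h * pd i (pd j f) (p + \<xi> *\<^sub>R dirv j + \<eta> *\<^sub>R dirv i))"
    using second_difference_mvt[OF f, of _ p j i] by (simp add: algebra_simps)
  then obtain X' Y' where XY': "\<And>h. 0 < h \<Longrightarrow> 0 < X' h \<and> X' h < h \<and> 0 < Y' h \<and> Y' h < h \<and>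
      ?\<Delta> h = h * (h * pd i (pd j f) (?q X' Y' j i h))"
    by metis
  have cont: "isCont (pd j (pd i f)) p" "isCont (pd i (pd j f)) p"
    by (simp_all add: differentiable_imp_continuous_within smooth3_differentiable smooth3_pd f)
  have "((\<lambda>h. pd j (pd i f) (?q X Y i j h)) \<longlongrightarrow> pd j (pd i f) p) (at_right 0)"
    using XY by (intro isCont_tendsto_compose[OF cont(1)] tendsto_at_right_0_between) blast
  moreover have "((\<lambda>h. pd j (pd i f) (?q X Y i j h)) \<longlongrightarrow> pd i (pd j f) p) (at_right 0)"
  proof (rule Lim_transform_eventually)
    show "((\<lambda>h. pd i (pd j f) (?q X' Y' j i h)) \<longlongrightarrow> pd i (pd j f) p) (at_right 0)"
      using XY' by (intro isCont_tendsto_compose[OF cont(2)] tendsto_at_right_0_between) blast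
    show "\<forall>\<^sub>F h in at_right 0. pd i (pd j f) (?q X' Y' j i h) = pd j (pd i f) (?q X Y i j h)"
      using eventually_at_right_less[of "0::real"]
      by (rule eventually_mono) (use XY XY' in force)
  qed
  ultimately show ?thesis
    using tendsto_unique[OF trivial_limit_at_right_real] by blast
qed

section \<open>The vector fields and their commutators\<close>

definition Gam_coeff :: "nat \<Rightarrow> nat \<Rightarrow> pt \<Rightarrow> real" where
 "Gam_coeff k j = (if k = 0 then (if j = 0 then affine3 1 0 0 0 else if j = 1 then affine3 0 1 0 0 else affine3 0 0 1 0)
   else if k = 1 then (if j = 0 then affine3 0 1 0 0 else if j = 1 then affine3 1 0 0 0 else affine3 0 0 0 0)
   else if k = 2 then (if j = 0 then affine3 0 0 1 0 else if j = 1 then affine3 0 0 0 0 else affine3 1 0 0 0)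
   else if k = 3 then (if j = 0 then affine3 0 0 0 0 else if j = 1 then affine3 0 0 (-1) 0 else affine3 0 1 0 0)
   else if k = 4 then (if j = 0 then affine3 0 0 0 1 else affine3 0 0 0 0)
   else if k = 5 then (if j = 1 then affine3 0 0 0 1 else affine3 0 0 0 0)
   else (if j = 2 then affine3 0 0 0 1 else affine3 0 0 0 0))"

lemma Gam_coeff_affine3: "\<exists>a b c d. Gam_coeff k j = affine3 a b c d"
  unfolding Gam_coeff_def by (simp split: if_split; blast)

lemma differentiable_Gam_coeff: "Gam_coeff k j differentiable (at p)"
  using Gam_coeff_affine3[of k j] differentiable_affine3 by metis

lemma pd_Gam_coeff_const: "pd i (Gam_coeff k j) p = pd i (Gam_coeff k j) 0"
  using Gam_coeff_affine3[of k j] by (auto simp: pd_affine3)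

lemma Gam_eq_coeff:
  "Gam k f p = Gam_coeff k 0 p * pd 0 f p + Gam_coeff k 1 p * pd 1 f p + Gam_coeff k 2 p * pd 2 f p"
proof -
  consider "k = 0" | "k = 1" | "k = 2" | "k = 3" | "k = 4" | "k = 5" | "k \<ge> 6" by arith
  then show ?thesis
    by cases (simp_all add: Gam_def Gam_coeff_def affine3_def)
qed

lemma Gam_eq_coeff_fun:
  "Gam k f = (\<lambda>p. Gam_coeff k 0 p * pd 0 f p + Gam_coeff k 1 p * pd 1 f p + Gam_coeff k 2 p * pd 2 f p)"
  by (simp add: Gam_eq_coeff fun_eq_iff)

lemma smooth3_Gam_coeff_mult: "smooth3 f \<Longrightarrow> smooth3 (\<lambda>q. Gam_coeff k j q * f q)"
  using Gam_coeff_affine3[of k j] smooth3_affine3_mult by metis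

lemma smooth3_Gam: "smooth3 f \<Longrightarrow> smooth3 (Gam k f)"
  unfolding Gam_eq_coeff_fun by (intro smooth3_add smooth3_Gam_coeff_mult smooth3_pd)

lemma Gam_sum:
  assumes "finite A" "\<And>x. x \<in> A \<Longrightarrow> smooth3 (F x)"
  shows "Gam k (\<lambda>q. \<Sum>x\<in>A. c x * F x q) = (\<lambda>q. \<Sum>x\<in>A. c x * Gam k (F x) q)"
  using assms
  by (simp add: Gam_eq_coeff_fun pd_sum smooth3_differentiable sum_distrib_left sum.distrib
      algebra_simps)

lemma pd_Gam:
  assumes "smooth3 f"
  shows "pd i (Gam k f) p =
    (pd i (Gam_coeff k 0) p * pd 0 f p + Gam_coeff k 0 p * pd i (pd 0 f) p) +
    (pd i (Gam_coeff k 1) p * pd 1 f p + Gam_coeff k 1 p * pd i (pd 1 f) p) +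
    (pd i (Gam_coeff k 2) p * pd 2 f p + Gam_coeff k 2 p * pd i (pd 2 f) p)"
  unfolding Gam_eq_coeff_fun
  by (simp add: pd_add pd_mult differentiable_Gam_coeff smooth3_differentiable smooth3_pd assms)

lemma pd_Gam_commute:
  assumes "smooth3 f"
  shows "pd i (Gam k f) p = Gam k (pd i f) p +
     (pd i (Gam_coeff k 0) 0 * pd 0 f p + pd i (Gam_coeff k 1) 0 * pd 1 f p
      + pd i (Gam_coeff k 2) 0 * pd 2 f p)"
  unfolding pd_Gam[OF assms] Gam_eq_coeff[of k "pd i f"]
  by (simp add: pd_commute[OF assms, of i] pd_Gam_coeff_const[of i k _ p] algebra_simps)

text \<open>The bracket \<open>[Gam a, Gam b] = \<sigma> Gam c\<close> is recorded as \<open>((a, b), (\<sigma>, c))\<close>; pairs of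
  commuting fields are omitted.\<close>
definition Gam_bracket_table :: "((nat \<times> nat) \<times> (real \<times> nat)) list" where
  "Gam_bracket_table =
    [((0, 4), (-1, 4)), ((0, 5), (-1, 5)), ((0, 6), (-1, 6)), ((1, 2), (1, 3)), ((1, 3), (1, 2)),
     ((1, 4), (-1, 5)), ((1, 5), (-1, 4)), ((2, 1), (-1, 3)), ((2, 3), (-1, 1)), ((2, 4), (-1, 6)),
     ((2, 6), (-1, 4)), ((3, 1), (-1, 2)), ((3, 2), (1, 1)), ((3, 5), (-1, 6)), ((3, 6), (1, 5)),
     ((4, 0), (1, 4)), ((4, 1), (1, 5)), ((4, 2), (1, 6)), ((5, 0), (1, 5)), ((5, 1), (1, 4)),
     ((5, 3), (1, 6)), ((6, 0), (1, 6)), ((6, 2), (1, 4)), ((6, 3), (-1, 5))]"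

definition Gam_bracket :: "nat \<Rightarrow> nat \<Rightarrow> real \<times> nat" where
  "Gam_bracket a b = (case map_of Gam_bracket_table (a, b) of None \<Rightarrow> (0, 0) | Some v \<Rightarrow> v)"

lemma Gam_bracket_index: "snd (Gam_bracket a b) < 7"
proof (cases "map_of Gam_bracket_table (a, b)")
  case (Some v)
  then have "((a, b), v) \<in> set Gam_bracket_table" by (rule map_of_SomeD)
  then show ?thesis using Some by (auto simp: Gam_bracket_def Gam_bracket_table_def)
qed (simp add: Gam_bracket_def)

lemma seven_cases: "(a::nat) < 7 \<Longrightarrow> a = 0 \<or> a = 1 \<or> a = 2 \<or> a = 3 \<or> a = 4 \<or> a = 5 \<or> a = 6"
  by arith

lemma Gam_commutator_eq:
  assumes f: "smooth3 f"
  shows "Gam a (Gam b f) p - Gam b (Gam a f) p =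
     (Gam a (Gam_coeff b 0) p - Gam b (Gam_coeff a 0) p) * pd 0 f p
   + (Gam a (Gam_coeff b 1) p - Gam b (Gam_coeff a 1) p) * pd 1 f p
   + (Gam a (Gam_coeff b 2) p - Gam b (Gam_coeff a 2) p) * pd 2 f p"
  unfolding Gam_eq_coeff[of a "Gam b f"] Gam_eq_coeff[of b "Gam a f"]
    Gam_eq_coeff[of a "Gam_coeff b _"] Gam_eq_coeff[of b "Gam_coeff a _"] pd_Gam[OF f]
    pd_commute[OF f, of 1 0] pd_commute[OF f, of 2 0] pd_commute[OF f, of 2 1]
  by (simp add: algebra_simps)

lemma Gam_commute:
  assumes f: "smooth3 f" and "a < 7" "b < 7"
  shows "Gam a (Gam b f) p = Gam b (Gam a f) p + fst (Gam_bracket a b) * Gam (snd (Gam_bracket a b)) f p"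
proof -
  have "Gam a (Gam b f) p - Gam b (Gam a f) p = fst (Gam_bracket a b) * Gam (snd (Gam_bracket a b)) f p"
    unfolding Gam_commutator_eq[OF f] Gam_eq_coeff[of "snd (Gam_bracket a b)"]
    using seven_cases[OF \<open>a < 7\<close>] seven_cases[OF \<open>b < 7\<close>]
    by (elim disjE; simp add: Gam_def Gam_coeff_def pd_affine3 affine3_def Gam_bracket_def
        Gam_bracket_table_def tco_def x1co_def x2co_def)
  then show ?thesis by simp
qed

section \<open>Multi-indices\<close>

definition msize :: "(nat \<Rightarrow> nat) \<Rightarrow> nat" where
  "msize \<alpha> = (\<Sum>k<7. \<alpha> k)"

lemma multi_iff: "\<alpha> \<in> multi s \<longleftrightarrow> (\<forall>k\<ge>7. \<alpha> k = 0) \<and> msize \<alpha> \<le> s"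
  unfolding multi_def msize_def by simp

lemma multi_mono: "s \<le> t \<Longrightarrow> multi s \<subseteq> multi t"
  by (auto simp: multi_iff)

lemma zero_in_multi: "(\<lambda>_. 0) \<in> multi s"
  unfolding multi_iff msize_def by simp

lemma multi_bound: "\<alpha> \<in> multi s \<Longrightarrow> \<alpha> k \<le> s"
  unfolding multi_iff msize_def
  by (cases "k < 7") (auto intro: order_trans[OF member_le_sum[of k "{..<7}"]])

lemma multi_0: "\<alpha> \<in> multi 0 \<Longrightarrow> \<alpha> = (\<lambda>_. 0)"
  using multi_bound[of \<alpha> 0] by auto

lemma finite_multi: "finite (multi s)"
proof (rule finite_subset)
  show "multi s \<subseteq> {\<alpha>. \<forall>k. (k \<in> {..<7} \<longrightarrow> \<alpha> k \<in> {..s}) \<and> (k \<notin> {..<7} \<longrightarrow> \<alpha> k = 0)}"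
    using multi_bound by (auto simp: multi_iff)
  show "finite {\<alpha>. \<forall>k. (k \<in> {..<7::nat} \<longrightarrow> \<alpha> k \<in> {..s}) \<and> (k \<notin> {..<7} \<longrightarrow> \<alpha> k = (0::nat))}"
    by (rule finite_set_of_finite_funs) auto
qed

lemma msize_incr: "a < 7 \<Longrightarrow> msize (\<alpha>(a := Suc (\<alpha> a))) = Suc (msize \<alpha>)"
  unfolding msize_def by (simp add: sum.remove[of "{..<7}" a])

lemma multi_incr: "\<alpha> \<in> multi n \<Longrightarrow> a < 7 \<Longrightarrow> \<alpha>(a := Suc (\<alpha> a)) \<in> multi (Suc n)"
  unfolding multi_iff by (simp add: msize_incr)

lemma multi_Suc_decompose:
  assumes \<alpha>: "\<alpha> \<in> multi (Suc n)" and nz: "\<alpha> \<noteq> (\<lambda>_. 0)"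
  obtains k \<alpha>' where "k < 7" "\<forall>m<k. \<alpha>' m = 0" "\<alpha>' \<in> multi n" "\<alpha> = \<alpha>'(k := Suc (\<alpha>' k))"
proof -
  define k where "k = (LEAST m. \<alpha> m \<noteq> 0)"
  obtain m where "\<alpha> m \<noteq> 0" using nz by auto
  then have k: "\<alpha> k \<noteq> 0" unfolding k_def by (rule LeastI)
  have below: "\<forall>m<k. \<alpha> m = 0" unfolding k_def using not_less_Least by blast
  have "k < 7" using k \<alpha> by (meson multi_iff not_le)
  define \<alpha>' where "\<alpha>' = \<alpha>(k := \<alpha> k - 1)"
  have eq: "\<alpha> = \<alpha>'(k := Suc (\<alpha>' k))" unfolding \<alpha>'_def using k by (auto simp: fun_eq_iff)
  have "msize \<alpha> = Suc (msize \<alpha>')"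
    using msize_incr[OF \<open>k < 7\<close>, of \<alpha>'] eq by simp
  then have "\<alpha>' \<in> multi n"
    using \<alpha> \<open>k < 7\<close> unfolding multi_iff \<alpha>'_def by simp
  moreover have "\<forall>m<k. \<alpha>' m = 0" using below unfolding \<alpha>'_def by simp
  ultimately show ?thesis using that \<open>k < 7\<close> eq by blast
qed

definition Gam_word :: "(nat \<Rightarrow> nat) \<Rightarrow> nat list" where
  "Gam_word \<alpha> = concat (map (\<lambda>k. replicate (\<alpha> k) k) [0..<7])"

lemma foldr_replicate_concat:
  "foldr (\<lambda>k g. (Gam k ^^ \<alpha> k) g) ks f = foldr Gam (concat (map (\<lambda>k. replicate (\<alpha> k) k) ks)) f"
  by (induction ks) simp_all

lemma GamA_eq_foldr: "GamA \<alpha> f = foldr Gam (Gam_word \<alpha>) f"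
  unfolding GamA_def Gam_word_def by (rule foldr_replicate_concat)

lemma length_Gam_word: "length (Gam_word \<alpha>) = msize \<alpha>"
proof -
  have "length (concat (map (\<lambda>k. replicate (\<alpha> k) k) ks)) = sum_list (map \<alpha> ks)" for ks
    by (induction ks) auto
  then show ?thesis
    unfolding Gam_word_def msize_def by (simp add: interv_sum_list_conv_sum_set_nat lessThan_atLeast0)
qed

lemma set_Gam_word: "set (Gam_word \<alpha>) \<subseteq> {..<7}"
  unfolding Gam_word_def by auto

lemma GamA_zero: "GamA (\<lambda>_. 0) f = f"
  unfolding GamA_def by (simp add: upt_rec)

lemma GamA_incr:
  assumes "\<forall>m<a. \<alpha> m = 0" "a < 7"
  shows "Gam a (GamA \<alpha> f) = GamA (\<alpha>(a := Suc (\<alpha> a))) f"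
proof -
  have split: "[0..<7] = [0..<a] @ a # [Suc a..<7]"
    using assms(2) upt_add_eq_append[of 0 a "7 - a"] by (simp add: upt_conv_Cons)
  let ?\<beta> = "\<alpha>(a := Suc (\<alpha> a))"
  have m: "map (\<lambda>k. replicate (\<alpha> k) k) [0..<a] = map (\<lambda>k. []) [0..<a]"
       "map (\<lambda>k. replicate (?\<beta> k) k) [0..<a] = map (\<lambda>k. []) [0..<a]"
       "map (\<lambda>k. replicate (?\<beta> k) k) [Suc a..<7] = map (\<lambda>k. replicate (\<alpha> k) k) [Suc a..<7]"
    using assms(1) by (auto intro!: map_cong)
  have nil: "concat (map (\<lambda>k. []) xs) = []" for xs :: "nat list"
    by (induction xs) auto
  have "Gam_word ?\<beta> = a # Gam_word \<alpha>"
    unfolding Gam_word_def split map_append list.map concat_append concat.simps m nil by simp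
  then show ?thesis unfolding GamA_eq_foldr by simp
qed

lemma GamA_Suc_decompose:
  assumes "\<alpha> \<in> multi (Suc n)" "\<alpha> \<noteq> (\<lambda>_. 0)"
  obtains k \<alpha>' where "k < 7" "\<alpha>' \<in> multi n" "\<And>f. GamA \<alpha> f = Gam k (GamA \<alpha>' f)"
proof -
  obtain k \<alpha>' where "k < 7" "\<forall>m<k. \<alpha>' m = 0" "\<alpha>' \<in> multi n" "\<alpha> = \<alpha>'(k := Suc (\<alpha>' k))"
    using multi_Suc_decompose[OF assms] .
  with GamA_incr show ?thesis using that by metis
qed

lemma smooth3_foldr_Gam: "smooth3 f \<Longrightarrow> smooth3 (foldr Gam w f)"
  by (induction w) (simp_all add: smooth3_Gam)

lemma smooth3_GamA: "smooth3 f \<Longrightarrow> smooth3 (GamA \<alpha> f)"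
  unfolding GamA_eq_foldr by (rule smooth3_foldr_Gam)

section \<open>Reordering products of vector fields\<close>

text \<open>On smooth functions \<open>T\<close> is a linear combination of the \<open>B x\<close> whose coefficients do not
  depend on the function; this is what makes all constants below uniform in \<open>\<psi>\<close>.\<close>
definition op_span :: "'i set \<Rightarrow> ('i \<Rightarrow> (pt \<Rightarrow> real) \<Rightarrow> pt \<Rightarrow> real) \<Rightarrow> ((pt \<Rightarrow> real) \<Rightarrow> pt \<Rightarrow> real) \<Rightarrow> bool"
  where "op_span A B T \<longleftrightarrow> (\<exists>c. \<forall>\<psi>. smooth3 \<psi> \<longrightarrow> T \<psi> = (\<lambda>p. \<Sum>x\<in>A. c x * B x \<psi> p))"

lemma op_span_basis:
  assumes "finite A" "x \<in> A"
  shows "op_span A B (B x)"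
  unfolding op_span_def
proof (intro exI[of _ "\<lambda>y. if y = x then 1 else 0"] allI impI ext)
  fix \<psi> p
  have "(\<Sum>y\<in>A. (if y = x then 1 else 0) * B y \<psi> p) = (\<Sum>y\<in>A. if y = x then B x \<psi> p else 0)"
    by (rule sum.cong) auto
  then show "B x \<psi> p = (\<Sum>y\<in>A. (if y = x then 1 else 0) * B y \<psi> p)"
    using assms by simp
qed

lemma op_span_add:
  assumes "op_span A B T" "op_span A B U"
  shows "op_span A B (\<lambda>\<psi> p. T \<psi> p + U \<psi> p)"
proof -
  from assms obtain c d where "\<forall>\<psi>. smooth3 \<psi> \<longrightarrow> T \<psi> = (\<lambda>p. \<Sum>x\<in>A. c x * B x \<psi> p)"
    "\<forall>\<psi>. smooth3 \<psi> \<longrightarrow> U \<psi> = (\<lambda>p. \<Sum>x\<in>A. d x * B x \<psi> p)"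
    unfolding op_span_def by blast
  then show ?thesis
    unfolding op_span_def
    by (intro exI[of _ "\<lambda>x. c x + d x"]) (simp add: sum.distrib distrib_right)
qed

lemma op_span_cmult:
  assumes "op_span A B T"
  shows "op_span A B (\<lambda>\<psi> p. \<sigma> * T \<psi> p)"
proof -
  from assms obtain c where "\<forall>\<psi>. smooth3 \<psi> \<longrightarrow> T \<psi> = (\<lambda>p. \<Sum>x\<in>A. c x * B x \<psi> p)"
    unfolding op_span_def by blast
  then show ?thesis
    unfolding op_span_def
    by (intro exI[of _ "\<lambda>x. \<sigma> * c x"]) (simp add: sum_distrib_left mult.assoc)
qed

lemma op_span_cong:
  assumes "op_span A B T" "\<And>\<psi>. smooth3 \<psi> \<Longrightarrow> T \<psi> = U \<psi>"
  shows "op_span A B U"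
proof -
  obtain c where "\<And>\<psi>. smooth3 \<psi> \<Longrightarrow> T \<psi> = (\<lambda>p. \<Sum>x\<in>A. c x * B x \<psi> p)"
    using assms(1) unfolding op_span_def by blast
  then show ?thesis unfolding op_span_def using assms(2) by (intro exI[of _ c]) simp
qed

lemma op_span_subst:
  assumes "op_span A B T" "\<And>\<psi>. smooth3 \<psi> \<Longrightarrow> smooth3 (S \<psi>)"
  shows "op_span A (\<lambda>x \<psi>. B x (S \<psi>)) (\<lambda>\<psi>. T (S \<psi>))"
proof -
  obtain c where "\<And>\<psi>. smooth3 \<psi> \<Longrightarrow> T \<psi> = (\<lambda>p. \<Sum>x\<in>A. c x * B x \<psi> p)"
    using assms(1) unfolding op_span_def by blast
  then show ?thesis unfolding op_span_def using assms(2) by (intro exI[of _ c]) simp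
qed

lemma op_span_compose:
  assumes T: "op_span A B T"
    and D: "\<And>\<psi> c. smooth3 \<psi> \<Longrightarrow> D (\<lambda>q. \<Sum>x\<in>A. c x * B x \<psi> q) = (\<lambda>q. \<Sum>x\<in>A. c x * D (B x \<psi>) q)"
    and DB: "\<And>x. x \<in> A \<Longrightarrow> op_span A' B' (\<lambda>\<psi>. D (B x \<psi>))"
  shows "op_span A' B' (\<lambda>\<psi>. D (T \<psi>))"
proof -
  obtain c where c: "\<And>\<psi>. smooth3 \<psi> \<Longrightarrow> T \<psi> = (\<lambda>p. \<Sum>x\<in>A. c x * B x \<psi> p)"
    using T unfolding op_span_def by blast
  have "\<forall>x\<in>A. \<exists>d. \<forall>\<psi>. smooth3 \<psi> \<longrightarrow> D (B x \<psi>) = (\<lambda>p. \<Sum>y\<in>A'. d y * B' y \<psi> p)"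
    using DB unfolding op_span_def by blast
  then obtain d where "\<forall>x\<in>A. \<forall>\<psi>. smooth3 \<psi> \<longrightarrow> D (B x \<psi>) = (\<lambda>p. \<Sum>y\<in>A'. d x y * B' y \<psi> p)"
    by (rule bchoice[THEN exE])
  then have d: "\<And>x \<psi>. x \<in> A \<Longrightarrow> smooth3 \<psi> \<Longrightarrow> D (B x \<psi>) = (\<lambda>p. \<Sum>y\<in>A'. d x y * B' y \<psi> p)"
    by blast
  have "D (T \<psi>) = (\<lambda>p. \<Sum>y\<in>A'. (\<Sum>x\<in>A. c x * d x y) * B' y \<psi> p)" if "smooth3 \<psi>" for \<psi>
  proof
    fix p
    have "D (T \<psi>) p = (\<Sum>x\<in>A. c x * (\<Sum>y\<in>A'. d x y * B' y \<psi> p))"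
      using that by (simp add: c D d)
    also have "\<dots> = (\<Sum>y\<in>A'. (\<Sum>x\<in>A. c x * d x y) * B' y \<psi> p)"
      by (simp add: sum_distrib_left sum_distrib_right mult.assoc sum.swap[of _ A])
    finally show "D (T \<psi>) p = (\<Sum>y\<in>A'. (\<Sum>x\<in>A. c x * d x y) * B' y \<psi> p)" .
  qed
  then show ?thesis unfolding op_span_def by (intro exI[of _ "\<lambda>y. \<Sum>x\<in>A. c x * d x y"]) simp
qed

lemma op_span_trans:
  assumes "op_span A B T" "\<And>x. x \<in> A \<Longrightarrow> op_span A' B' (B x)"
  shows "op_span A' B' T"
proof -
  have "op_span A' B' (\<lambda>\<psi>. (\<lambda>f. f) (T \<psi>))"
    by (rule op_span_compose[OF assms(1)]) (simp_all add: assms(2))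
  then show ?thesis by simp
qed

lemma op_span_compose_Gam:
  assumes "op_span A B T" "finite A" "\<And>x \<psi>. x \<in> A \<Longrightarrow> smooth3 \<psi> \<Longrightarrow> smooth3 (B x \<psi>)"
    and "\<And>x. x \<in> A \<Longrightarrow> op_span A' B' (\<lambda>\<psi>. Gam k (B x \<psi>))"
  shows "op_span A' B' (\<lambda>\<psi>. Gam k (T \<psi>))"
proof (rule op_span_compose[OF assms(1)])
  show "Gam k (\<lambda>q. \<Sum>x\<in>A. c x * B x \<psi> q) = (\<lambda>q. \<Sum>x\<in>A. c x * Gam k (B x \<psi>) q)"
    if "smooth3 \<psi>" for \<psi> c
    using that assms(2,3) by (intro Gam_sum) auto
qed (rule assms(4))

lemma op_span_reindex:
  assumes "op_span A (\<lambda>x. B (h x)) T" "finite A'" "h ` A \<subseteq> A'"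
  shows "op_span A' B T"
proof (rule op_span_trans[OF assms(1)])
  show "op_span A' B (B (h x))" if "x \<in> A" for x
    using that assms(2,3) by (intro op_span_basis) auto
qed

lemma op_span_mono:
  assumes "op_span A B T" "finite A'" "A \<subseteq> A'"
  shows "op_span A' B T"
  using op_span_reindex[where h = id] assms by simp

lemma op_span_bound:
  assumes "op_span A B T" "finite A"
  shows "\<exists>K\<ge>0. \<forall>\<psi> p. smooth3 \<psi> \<longrightarrow> \<bar>T \<psi> p\<bar> \<le> K * (\<Sum>x\<in>A. \<bar>B x \<psi> p\<bar>)"
proof -
  obtain c where c: "\<And>\<psi>. smooth3 \<psi> \<Longrightarrow> T \<psi> = (\<lambda>p. \<Sum>x\<in>A. c x * B x \<psi> p)"
    using assms(1) unfolding op_span_def by blast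
  have "\<bar>T \<psi> p\<bar> \<le> (\<Sum>x\<in>A. \<bar>c x\<bar>) * (\<Sum>x\<in>A. \<bar>B x \<psi> p\<bar>)" if "smooth3 \<psi>" for \<psi> p
  proof -
    have "\<bar>T \<psi> p\<bar> \<le> (\<Sum>x\<in>A. \<bar>c x\<bar> * \<bar>B x \<psi> p\<bar>)"
      using c[OF that] sum_abs[of "\<lambda>x. c x * B x \<psi> p" A] by (simp add: abs_mult)
    also have "\<dots> \<le> (\<Sum>x\<in>A. \<Sum>y\<in>A. \<bar>c y\<bar> * \<bar>B x \<psi> p\<bar>)"
    proof (rule sum_mono)
      fix x assume "x \<in> A"
      then show "\<bar>c x\<bar> * \<bar>B x \<psi> p\<bar> \<le> (\<Sum>y\<in>A. \<bar>c y\<bar> * \<bar>B x \<psi> p\<bar>)"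
        using assms(2) by (auto intro: member_le_sum)
    qed
    also have "\<dots> = (\<Sum>y\<in>A. \<bar>c y\<bar>) * (\<Sum>x\<in>A. \<bar>B x \<psi> p\<bar>)"
      unfolding sum_product by (rule sum.swap)
    finally show ?thesis .
  qed
  then show ?thesis by (intro exI[of _ "\<Sum>x\<in>A. \<bar>c x\<bar>"]) (simp add: sum_nonneg)
qed

definition pos_multi :: "nat \<Rightarrow> (nat \<Rightarrow> nat) set" where
  "pos_multi n = {\<alpha> \<in> multi n. \<alpha> \<noteq> (\<lambda>_. 0)}"

lemma finite_pos_multi: "finite (pos_multi n)"
  unfolding pos_multi_def using finite_multi by simp

lemma pos_multi_mono: "n \<le> m \<Longrightarrow> pos_multi n \<subseteq> pos_multi m"
  unfolding pos_multi_def using multi_mono by blast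

lemma Gam_GamA_span_sorted:
  assumes "a < 7" "\<alpha> \<in> multi n" "\<forall>m<a. \<alpha> m = 0"
  shows "op_span (pos_multi (Suc n)) GamA (\<lambda>\<psi>. Gam a (GamA \<alpha> \<psi>))"
proof -
  have "\<alpha>(a := Suc (\<alpha> a)) \<in> pos_multi (Suc n)"
    using multi_incr[OF assms(2,1)] by (auto simp: pos_multi_def fun_eq_iff)
  then have "op_span (pos_multi (Suc n)) GamA (GamA (\<alpha>(a := Suc (\<alpha> a))))"
    by (rule op_span_basis[OF finite_pos_multi])
  then show ?thesis by (simp add: GamA_incr[OF assms(3,1)])
qed

text \<open>Insertion sort: moving \<open>Gam a\<close> past \<open>Gam k\<close>, \<open>k < a\<close>, costs only a bracket term of lower
  order.\<close>
lemma Gam_GamA_span_step: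
  assumes IH_lower: "\<And>c \<gamma>. c < 7 \<Longrightarrow> \<gamma> \<in> multi n \<Longrightarrow>
      op_span (pos_multi (Suc n)) GamA (\<lambda>\<psi>. Gam c (GamA \<gamma> \<psi>))"
    and IH_smaller: "\<And>k \<gamma>. k < a \<Longrightarrow> \<gamma> \<in> multi (Suc n) \<Longrightarrow>
      op_span (pos_multi (Suc (Suc n))) GamA (\<lambda>\<psi>. Gam k (GamA \<gamma> \<psi>))"
    and "a < 7" "k < a" "\<forall>m<k. \<alpha> m = 0" "\<alpha> \<in> multi n"
  shows "op_span (pos_multi (Suc (Suc n))) GamA (\<lambda>\<psi>. Gam a (GamA (\<alpha>(k := Suc (\<alpha> k))) \<psi>))"
proof -
  have k: "k < 7" using assms by simp
  obtain \<sigma> b where bracket: "Gam_bracket a k = (\<sigma>, b)" by fastforce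
  then have "b < 7" using Gam_bracket_index[of a k] by simp
  have "op_span (pos_multi (Suc (Suc n))) GamA (\<lambda>\<psi>. Gam k (Gam a (GamA \<alpha> \<psi>)))"
  proof (rule op_span_compose_Gam[OF IH_lower[OF \<open>a < 7\<close> \<open>\<alpha> \<in> multi n\<close>] finite_pos_multi])
    show "op_span (pos_multi (Suc (Suc n))) GamA (\<lambda>\<psi>. Gam k (GamA x \<psi>))" if "x \<in> pos_multi (Suc n)" for x
      using that \<open>k < a\<close> by (intro IH_smaller) (auto simp: pos_multi_def)
  qed (rule smooth3_GamA)
  moreover have "op_span (pos_multi (Suc (Suc n))) GamA (\<lambda>\<psi> p. \<sigma> * Gam b (GamA \<alpha> \<psi>) p)"
    by (intro op_span_cmult op_span_mono[OF IH_lower[OF \<open>b < 7\<close> \<open>\<alpha> \<in> multi n\<close>]]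
        finite_pos_multi pos_multi_mono) simp
  ultimately show ?thesis
    by (rule op_span_cong[OF op_span_add])
      (simp add: ext Gam_commute[OF smooth3_GamA \<open>a < 7\<close> k] bracket GamA_incr[OF assms(5) k, symmetric])
qed

lemma Gam_GamA_span:
  "a < 7 \<Longrightarrow> \<alpha> \<in> multi n \<Longrightarrow> op_span (pos_multi (Suc n)) GamA (\<lambda>\<psi>. Gam a (GamA \<alpha> \<psi>))"
proof (induction n arbitrary: a \<alpha>)
  case 0
  then have "\<alpha> = (\<lambda>_. 0)" using multi_0 by blast
  with 0 show ?case by (intro Gam_GamA_span_sorted) auto
next
  case (Suc n)
  show ?case using Suc.prems
  proof (induction a arbitrary: \<alpha> rule: less_induct)
    case (less a)
    show ?case
    proof (cases "\<forall>m<a. \<alpha> m = 0")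
      case True
      then show ?thesis using less.prems by (intro Gam_GamA_span_sorted)
    next
      case False
      then have "\<alpha> \<noteq> (\<lambda>_. 0)" by auto
      from multi_Suc_decompose[OF \<open>\<alpha> \<in> multi (Suc n)\<close> this]
      obtain k \<alpha>' where "k < 7" "\<forall>m<k. \<alpha>' m = 0" "\<alpha>' \<in> multi n" and \<alpha>: "\<alpha> = \<alpha>'(k := Suc (\<alpha>' k))" .
      have "k < a"
      proof (rule ccontr)
        assume "\<not> k < a"
        then show False using False \<alpha> \<open>\<forall>m<k. \<alpha>' m = 0\<close> by auto
      qed
      show ?thesis
        unfolding \<alpha> using Suc.IH less.IH less.prems \<open>k < a\<close> \<open>\<forall>m<k. \<alpha>' m = 0\<close> \<open>\<alpha>' \<in> multi n\<close>
        by (intro Gam_GamA_span_step) auto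
    qed
  qed
qed

lemma foldr_Gam_span:
  assumes "set w \<subseteq> {..<7}" "j < 7"
  shows "op_span (pos_multi (Suc (length w))) GamA (\<lambda>\<psi>. foldr Gam w (Gam j \<psi>))"
  using assms(1)
proof (induction w)
  case Nil
  have "op_span (pos_multi (Suc 0)) GamA (\<lambda>\<psi>. Gam j (GamA (\<lambda>_. 0) \<psi>))"
    using assms(2) by (intro Gam_GamA_span zero_in_multi)
  then show ?case by (simp add: GamA_zero)
next
  case (Cons a w)
  then have "a < 7" "op_span (pos_multi (Suc (length w))) GamA (\<lambda>\<psi>. foldr Gam w (Gam j \<psi>))"
    by auto
  have "op_span (pos_multi (Suc (Suc (length w)))) GamA (\<lambda>\<psi>. Gam a (foldr Gam w (Gam j \<psi>)))"
  proof (rule op_span_compose_Gam[OF \<open>op_span _ _ _\<close> finite_pos_multi smooth3_GamA])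
    show "op_span (pos_multi (Suc (Suc (length w)))) GamA (\<lambda>\<psi>. Gam a (GamA x \<psi>))"
      if "x \<in> pos_multi (Suc (length w))" for x
      using that \<open>a < 7\<close> by (intro Gam_GamA_span) (auto simp: pos_multi_def)
  qed
  then show ?case by simp
qed

lemma GamA_Gam_span:
  assumes "\<alpha> \<in> multi s" "j < 7"
  shows "op_span (pos_multi (Suc s)) GamA (\<lambda>\<psi>. GamA \<alpha> (Gam j \<psi>))"
proof (rule op_span_mono)
  show "op_span (pos_multi (Suc (msize \<alpha>))) GamA (\<lambda>\<psi>. GamA \<alpha> (Gam j \<psi>))"
    using foldr_Gam_span[OF set_Gam_word assms(2)] by (simp add: GamA_eq_foldr length_Gam_word)
  show "pos_multi (Suc (msize \<alpha>)) \<subseteq> pos_multi (Suc s)"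
    using assms(1) by (intro pos_multi_mono) (simp add: multi_iff)
qed (rule finite_pos_multi)

definition GamA_pd :: "nat \<times> (nat \<Rightarrow> nat) \<Rightarrow> (pt \<Rightarrow> real) \<Rightarrow> pt \<Rightarrow> real" where
  "GamA_pd m\<alpha> \<psi> = GamA (snd m\<alpha>) (pd (fst m\<alpha>) \<psi>)"

lemma GamA_pd_Pair: "GamA_pd (m, \<alpha>) = (\<lambda>\<psi>. GamA \<alpha> (pd m \<psi>))"
  by (simp add: GamA_pd_def fun_eq_iff)

lemma smooth3_GamA_pd: "smooth3 \<psi> \<Longrightarrow> smooth3 (GamA_pd m\<alpha> \<psi>)"
  unfolding GamA_pd_def by (intro smooth3_GamA smooth3_pd)

lemma finite_pd_index: "finite ({..<3::nat} \<times> multi n)"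
  using finite_multi by simp

lemma pd_index_mono: "n \<le> m \<Longrightarrow> {..<3::nat} \<times> multi n \<subseteq> {..<3} \<times> multi m"
  using multi_mono by blast

lemma pd_span_zero:
  assumes "i < 3"
  shows "op_span ({..<3} \<times> multi n) GamA_pd (\<lambda>\<psi>. pd i (GamA (\<lambda>_. 0) \<psi>))"
proof -
  have "op_span ({..<3} \<times> multi n) GamA_pd (GamA_pd (i, \<lambda>_. 0))"
    using assms zero_in_multi by (intro op_span_basis finite_pd_index) auto
  then show ?thesis by (simp add: GamA_pd_Pair GamA_zero)
qed

lemma Gam_GamA_pd_span:
  assumes "k < 7" "m\<gamma> \<in> {..<3} \<times> multi n"
  shows "op_span ({..<3} \<times> multi (Suc n)) GamA_pd (\<lambda>\<psi>. Gam k (GamA_pd m\<gamma> \<psi>))"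
proof -
  obtain m \<gamma> where m\<gamma>: "m\<gamma> = (m, \<gamma>)" "m < 3" "\<gamma> \<in> multi n" using assms(2) by auto
  have "op_span (pos_multi (Suc n)) (\<lambda>\<beta> \<psi>. GamA \<beta> (pd m \<psi>)) (\<lambda>\<psi>. Gam k (GamA \<gamma> (pd m \<psi>)))"
    by (rule op_span_subst[OF Gam_GamA_span[OF assms(1) m\<gamma>(3)] smooth3_pd])
  then have "op_span (pos_multi (Suc n)) (\<lambda>\<beta>. GamA_pd (m, \<beta>)) (\<lambda>\<psi>. Gam k (GamA_pd m\<gamma> \<psi>))"
    unfolding m\<gamma>(1) GamA_pd_Pair .
  then show ?thesis
    by (rule op_span_reindex) (use m\<gamma>(2) in \<open>auto simp: finite_pd_index pos_multi_def\<close>)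
qed

text \<open>The induction goes through because \<open>[pd i, Gam k]\<close> is a constant-coefficient combination
  of the \<open>pd m\<close> (\<open>pd_Gam_commute\<close>).\<close>
lemma pd_GamA_span:
  "i < 3 \<Longrightarrow> \<alpha> \<in> multi n \<Longrightarrow> op_span ({..<3} \<times> multi n) GamA_pd (\<lambda>\<psi>. pd i (GamA \<alpha> \<psi>))"
proof (induction n arbitrary: i \<alpha>)
  case 0
  then show ?case using multi_0 pd_span_zero by metis
next
  case (Suc n)
  show ?case
  proof (cases "\<alpha> = (\<lambda>_. 0)")
    case True
    then show ?thesis using pd_span_zero Suc.prems by simp
  next
    case False
    obtain k \<alpha>' where "k < 7" "\<alpha>' \<in> multi n" and \<alpha>: "\<And>f. GamA \<alpha> f = Gam k (GamA \<alpha>' f)"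
      using GamA_Suc_decompose[OF \<open>\<alpha> \<in> multi (Suc n)\<close> False] by blast
    let ?S = "op_span ({..<3} \<times> multi (Suc n)) GamA_pd"
    have lower: "?S (\<lambda>\<psi> p. \<sigma> * pd m (GamA \<alpha>' \<psi>) p)" if "m < 3" for m \<sigma>
      by (intro op_span_cmult op_span_mono[OF Suc.IH] that \<open>\<alpha>' \<in> multi n\<close> finite_pd_index
          pd_index_mono) simp
    have "?S (\<lambda>\<psi>. Gam k (pd i (GamA \<alpha>' \<psi>)))"
      by (rule op_span_compose_Gam[OF Suc.IH[OF \<open>i < 3\<close> \<open>\<alpha>' \<in> multi n\<close>] finite_pd_index
            smooth3_GamA_pd Gam_GamA_pd_span[OF \<open>k < 7\<close>]])
    then have "?S (\<lambda>\<psi> p. Gam k (pd i (GamA \<alpha>' \<psi>)) p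
        + (pd i (Gam_coeff k 0) 0 * pd 0 (GamA \<alpha>' \<psi>) p + pd i (Gam_coeff k 1) 0 * pd 1 (GamA \<alpha>' \<psi>) p
          + pd i (Gam_coeff k 2) 0 * pd 2 (GamA \<alpha>' \<psi>) p))"
      by (intro op_span_add lower) simp_all
    then show ?thesis
      by (rule op_span_cong) (simp add: \<alpha> pd_Gam_commute smooth3_GamA ext)
  qed
qed

section \<open>Pointwise estimates\<close>

lemma xnorm_pos: "(x1, x2) \<noteq> (0, 0) \<Longrightarrow> 0 < xnorm (t, x1, x2)"
  by (simp add: xnorm_def x1co_def x2co_def sum_power2_gt_zero_iff)

lemma abs_x1co_le_xnorm: "\<bar>x1co p\<bar> \<le> xnorm p"
  unfolding xnorm_def using real_sqrt_le_mono[of "(x1co p)\<^sup>2" "(x1co p)\<^sup>2 + (x2co p)\<^sup>2"] by simp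

lemma abs_x2co_le_xnorm: "\<bar>x2co p\<bar> \<le> xnorm p"
  unfolding xnorm_def using real_sqrt_le_mono[of "(x2co p)\<^sup>2" "(x1co p)\<^sup>2 + (x2co p)\<^sup>2"] by simp

lemma abs_le_jbr: "\<bar>y\<bar> \<le> jbr y"
  unfolding jbr_def using real_sqrt_le_mono[of "y\<^sup>2" "1 + y\<^sup>2"] by simp

lemma one_le_jbr: "1 \<le> jbr y"
  unfolding jbr_def using real_sqrt_le_mono[of 1 "1 + y\<^sup>2"] by simp

lemma radial_identity:
  fixes r t y1 y2 d0 d1 d2 :: real
  assumes "0 < r" "r * r = y1 * y1 + y2 * y2"
  shows "t * d0 + y1 * d1 + y2 * d2 = (t - r) * d0 + y1 * (y1 / r * d0 + d1) + y2 * (y2 / r * d0 + d2)"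
proof -
  have "y1 * (y1 / r * d0 + d1) + y2 * (y2 / r * d0 + d2) = (y1 * y1 + y2 * y2) / r * d0 + y1 * d1 + y2 * d2"
    using assms(1) by (simp add: field_simps)
  also have "\<dots> = r * d0 + y1 * d1 + y2 * d2"
    unfolding assms(2)[symmetric] using assms(1) by simp
  finally show ?thesis by (simp add: algebra_simps)
qed

text \<open>The heart of the estimate: in terms of the good derivatives \<open>Z\<^sub>k\<close>, the remaining plain
  derivatives in \<open>S\<close>, \<open>L\<^sub>j\<close>, \<open>\<Omega>\<close> only carry the factor \<open>t - |x|\<close>.\<close>
lemma Gam_Z_decomposition:
  assumes "0 < xnorm p"
  shows "Gam 0 g p = (tco p - xnorm p) * pd 0 g p + x1co p * Zf 1 g p + x2co p * Zf 2 g p"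
    and "Gam 1 g p = (tco p - xnorm p) * pd 1 g p + xnorm p * Zf 1 g p"
    and "Gam 2 g p = (tco p - xnorm p) * pd 2 g p + xnorm p * Zf 2 g p"
    and "Gam 3 g p = x1co p * Zf 2 g p - x2co p * Zf 1 g p"
proof -
  have "xnorm p * xnorm p = x1co p * x1co p + x2co p * x2co p"
    unfolding xnorm_def by (simp add: power2_eq_square[symmetric])
  from radial_identity[OF assms this]
  show "Gam 0 g p = (tco p - xnorm p) * pd 0 g p + x1co p * Zf 1 g p + x2co p * Zf 2 g p"
    by (simp add: Gam_def Zf_def)
  show "Gam 1 g p = (tco p - xnorm p) * pd 1 g p + xnorm p * Zf 1 g p"
       "Gam 2 g p = (tco p - xnorm p) * pd 2 g p + xnorm p * Zf 2 g p"
       "Gam 3 g p = x1co p * Zf 2 g p - x2co p * Zf 1 g p"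
    using assms unfolding Gam_def Zf_def by (simp_all add: field_simps)
qed

lemma abs_add_le: "\<bar>a\<bar> \<le> A \<Longrightarrow> \<bar>b\<bar> \<le> B \<Longrightarrow> \<bar>a + b\<bar> \<le> (A + B :: real)"
  by (rule order_trans[OF abs_triangle_ineq add_mono])

lemma abs_add3_le: "\<bar>a\<bar> \<le> A \<Longrightarrow> \<bar>b\<bar> \<le> B \<Longrightarrow> \<bar>c\<bar> \<le> C \<Longrightarrow> \<bar>a + b + c\<bar> \<le> (A + B + C :: real)"
  by (intro abs_add_le)

lemma Z_frame_coefficient_bounds:
  shows "\<bar>(tco p - xnorm p) * d\<bar> \<le> jbr (tco p - xnorm p) * \<bar>d\<bar>"
    and "\<bar>d\<bar> \<le> jbr (tco p - xnorm p) * \<bar>d\<bar>"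
    and "0 \<le> jbr (tco p - xnorm p) * \<bar>d\<bar>"
    and "0 < xnorm p \<Longrightarrow> \<bar>x1co p * z\<bar> \<le> xnorm p * \<bar>z\<bar>"
    and "0 < xnorm p \<Longrightarrow> \<bar>x2co p * z\<bar> \<le> xnorm p * \<bar>z\<bar>"
    and "0 < xnorm p \<Longrightarrow> \<bar>xnorm p * z\<bar> = xnorm p * \<bar>z\<bar>"
    and "0 < xnorm p \<Longrightarrow> 0 \<le> xnorm p * \<bar>z\<bar>"
  using abs_le_jbr[of "tco p - xnorm p"] one_le_jbr[of "tco p - xnorm p"]
    mult_right_mono[of 1 "jbr (tco p - xnorm p)" "\<bar>d\<bar>"] abs_x1co_le_xnorm[of p] abs_x2co_le_xnorm[of p]
  by (auto simp: abs_mult intro: mult_right_mono)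

lemma Gam_bound:
  assumes "0 < xnorm p" "k < 7"
  shows "\<bar>Gam k g p\<bar> \<le> xnorm p * (\<bar>Zf 1 g p\<bar> + \<bar>Zf 2 g p\<bar>)
            + jbr (tco p - xnorm p) * (\<bar>pd 0 g p\<bar> + \<bar>pd 1 g p\<bar> + \<bar>pd 2 g p\<bar>)"
proof -
  define r J where "r = xnorm p" and "J = jbr (tco p - xnorm p)"
  note J = Z_frame_coefficient_bounds(1-3)[where p = p, folded r_def J_def]
  note R = Z_frame_coefficient_bounds(4-7)[OF assms(1), folded r_def]
  note Z = Gam_Z_decomposition[OF assms(1), of g, folded r_def]
  have E: "xnorm p * (\<bar>Zf 1 g p\<bar> + \<bar>Zf 2 g p\<bar>)
        + jbr (tco p - xnorm p) * (\<bar>pd 0 g p\<bar> + \<bar>pd 1 g p\<bar> + \<bar>pd 2 g p\<bar>)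
      = r * \<bar>Zf 1 g p\<bar> + r * \<bar>Zf 2 g p\<bar> + J * \<bar>pd 0 g p\<bar> + J * \<bar>pd 1 g p\<bar> + J * \<bar>pd 2 g p\<bar>"
    by (simp add: r_def J_def algebra_simps)
  have N: "0 \<le> r * \<bar>Zf 1 g p\<bar>" "0 \<le> r * \<bar>Zf 2 g p\<bar>"
    "0 \<le> J * \<bar>pd 0 g p\<bar>" "0 \<le> J * \<bar>pd 1 g p\<bar>" "0 \<le> J * \<bar>pd 2 g p\<bar>"
    using J(3) R(4) by auto
  have "\<bar>Gam k g p\<bar>
      \<le> r * \<bar>Zf 1 g p\<bar> + r * \<bar>Zf 2 g p\<bar> + J * \<bar>pd 0 g p\<bar> + J * \<bar>pd 1 g p\<bar> + J * \<bar>pd 2 g p\<bar>"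
    using seven_cases[OF assms(2)]
  proof (elim disjE)
    assume "k = 0"
    have "\<bar>Gam k g p\<bar> \<le> J * \<bar>pd 0 g p\<bar> + r * \<bar>Zf 1 g p\<bar> + r * \<bar>Zf 2 g p\<bar>"
      unfolding \<open>k = 0\<close> Z(1) by (intro abs_add3_le J(1) R(1,2))
    then show ?thesis using N by linarith
  next
    assume "k = 1"
    have "\<bar>Gam k g p\<bar> \<le> J * \<bar>pd 1 g p\<bar> + r * \<bar>Zf 1 g p\<bar>"
      unfolding \<open>k = 1\<close> Z(2) by (intro abs_add_le J(1) eq_refl R(3))
    then show ?thesis using N by linarith
  next
    assume "k = 2"
    have "\<bar>Gam k g p\<bar> \<le> J * \<bar>pd 2 g p\<bar> + r * \<bar>Zf 2 g p\<bar>"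
      unfolding \<open>k = 2\<close> Z(3) by (intro abs_add_le J(1) eq_refl R(3))
    then show ?thesis using N by linarith
  next
    assume "k = 3"
    have "\<bar>Gam k g p\<bar> \<le> r * \<bar>Zf 2 g p\<bar> + r * \<bar>Zf 1 g p\<bar>"
      unfolding \<open>k = 3\<close> Z(4) diff_conv_add_uminus
      by (intro abs_add_le R(1)) (simp add: R(2))
    then show ?thesis using N by linarith
  next
    assume "k = 4"
    then show ?thesis using J(2)[of "pd 0 g p"] N by (simp add: Gam_def)
  next
    assume "k = 5"
    then show ?thesis using J(2)[of "pd 1 g p"] N by (simp add: Gam_def)
  next
    assume "k = 6"
    then show ?thesis using J(2)[of "pd 2 g p"] N by (simp add: Gam_def)
  qed
  then show ?thesis unfolding E .
qed

lemma finite_uniform_bound: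
  fixes f :: "'i \<Rightarrow> 'a \<Rightarrow> 'b \<Rightarrow> real"
  assumes "finite I"
    and "\<And>i. i \<in> I \<Longrightarrow> \<exists>K. \<forall>x y. P x y \<longrightarrow> f i x y \<le> K * g x y"
    and "\<And>x y. 0 \<le> g x y"
  shows "\<exists>K. \<forall>i\<in>I. \<forall>x y. P x y \<longrightarrow> f i x y \<le> K * g x y"
proof -
  from assms(2) have "\<forall>i\<in>I. \<exists>K. \<forall>x y. P x y \<longrightarrow> f i x y \<le> K * g x y" by blast
  then obtain K where K: "\<forall>i\<in>I. \<forall>x y. P x y \<longrightarrow> f i x y \<le> K i * g x y"
    by (rule bchoice[THEN exE])
  have "f i x y \<le> (\<Sum>j\<in>I. \<bar>K j\<bar>) * g x y" if "i \<in> I" "P x y" for i x y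
  proof -
    have "K i \<le> (\<Sum>j\<in>I. \<bar>K j\<bar>)"
      using member_le_sum[of i I "\<lambda>j. \<bar>K j\<bar>"] that(1) assms(1) by simp
    then have "K i * g x y \<le> (\<Sum>j\<in>I. \<bar>K j\<bar>) * g x y"
      using assms(3) by (rule mult_right_mono)
    then show ?thesis using K that by fastforce
  qed
  then show ?thesis by blast
qed

lemma ZNormS_nonneg: "0 \<le> ZNormS s f p"
  unfolding ZNormS_def by (intro sum_nonneg) auto

lemma DNormS_nonneg: "0 \<le> DNormS s f p"
  unfolding DNormS_def normS_def by (intro sum_nonneg) auto

lemma DNormS_eq: "DNormS s f p = (\<Sum>m\<alpha>\<in>{..<3} \<times> multi s. \<bar>GamA_pd m\<alpha> f p\<bar>)"
  unfolding DNormS_def normS_def GamA_pd_def sum.cartesian_product by (simp add: split_def)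

lemma GamNormS_eq: "GamNormS s f p = (\<Sum>j\<alpha>\<in>{..<7} \<times> multi s. \<bar>GamA (snd j\<alpha>) (Gam (fst j\<alpha>) f) p\<bar>)"
  unfolding GamNormS_def normS_def sum.cartesian_product by (simp add: split_def)

lemma Zf_le_ZNormS:
  assumes "\<alpha> \<in> multi s"
  shows "\<bar>Zf 1 (GamA \<alpha> f) p\<bar> + \<bar>Zf 2 (GamA \<alpha> f) p\<bar> \<le> ZNormS s f p"
proof -
  have "\<bar>Zf k (GamA \<alpha> f) p\<bar> \<le> (\<Sum>\<beta>\<in>multi s. \<bar>Zf k (GamA \<beta> f) p\<bar>)" for k
    using assms finite_multi by (intro member_le_sum) auto
  then show ?thesis unfolding ZNormS_def by (simp add: add_mono)
qed

lemma pd_GamA_bound: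
  "\<exists>K. \<forall>m\<alpha>\<in>{..<3} \<times> multi s. \<forall>\<psi> p. smooth3 \<psi> \<longrightarrow>
     \<bar>pd (fst m\<alpha>) (GamA (snd m\<alpha>) \<psi>) p\<bar> \<le> K * DNormS s \<psi> p"
proof (rule finite_uniform_bound[OF finite_pd_index _ DNormS_nonneg])
  fix m\<alpha> :: "nat \<times> (nat \<Rightarrow> nat)"
  assume "m\<alpha> \<in> {..<3} \<times> multi s"
  then have "op_span ({..<3} \<times> multi s) GamA_pd (\<lambda>\<psi>. pd (fst m\<alpha>) (GamA (snd m\<alpha>) \<psi>))"
    by (intro pd_GamA_span) auto
  from op_span_bound[OF this finite_pd_index]
  show "\<exists>K. \<forall>\<psi> p. smooth3 \<psi> \<longrightarrow> \<bar>pd (fst m\<alpha>) (GamA (snd m\<alpha>) \<psi>) p\<bar> \<le> K * DNormS s \<psi> p"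
    unfolding DNormS_eq by blast
qed

definition weighted_norm :: "nat \<Rightarrow> (pt \<Rightarrow> real) \<Rightarrow> pt \<Rightarrow> real" where
  "weighted_norm s \<psi> p = xnorm p * ZNormS s \<psi> p + jbr (tco p - xnorm p) * DNormS s \<psi> p"

lemma weighted_norm_nonneg: "0 \<le> weighted_norm s \<psi> p"
  using ZNormS_nonneg[of s \<psi> p] DNormS_nonneg[of s \<psi> p] one_le_jbr[of "tco p - xnorm p"]
  unfolding weighted_norm_def xnorm_def by simp

lemma GamA_pos_multi_bound:
  "\<exists>K. \<forall>\<beta>\<in>pos_multi (Suc s). \<forall>\<psi> p. smooth3 \<psi> \<and> 0 < xnorm p \<longrightarrow>
     \<bar>GamA \<beta> \<psi> p\<bar> \<le> K * weighted_norm s \<psi> p"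
proof -
  obtain KD where KD: "\<And>m \<alpha> \<psi> p. m < 3 \<Longrightarrow> \<alpha> \<in> multi s \<Longrightarrow> smooth3 \<psi> \<Longrightarrow>
      \<bar>pd m (GamA \<alpha> \<psi>) p\<bar> \<le> KD * DNormS s \<psi> p"
    using pd_GamA_bound[of s] by fastforce
  define M where "M = max 1 (3 * KD)"
  have "\<bar>GamA \<beta> \<psi> p\<bar> \<le> M * weighted_norm s \<psi> p"
    if "\<beta> \<in> pos_multi (Suc s)" "smooth3 \<psi>" "0 < xnorm p" for \<beta> \<psi> p
  proof -
    let ?r = "xnorm p" and ?J = "jbr (tco p - xnorm p)" and ?Z = "ZNormS s \<psi> p" and ?D = "DNormS s \<psi> p"
    from that(1) have "\<beta> \<in> multi (Suc s)" "\<beta> \<noteq> (\<lambda>_. 0)" unfolding pos_multi_def by auto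
    then obtain k \<alpha> where "k < 7" "\<alpha> \<in> multi s" and \<beta>: "\<And>f. GamA \<beta> f = Gam k (GamA \<alpha> f)"
      using GamA_Suc_decompose by blast
    have "\<bar>GamA \<beta> \<psi> p\<bar> \<le> ?r * (\<bar>Zf 1 (GamA \<alpha> \<psi>) p\<bar> + \<bar>Zf 2 (GamA \<alpha> \<psi>) p\<bar>)
        + ?J * (\<bar>pd 0 (GamA \<alpha> \<psi>) p\<bar> + \<bar>pd 1 (GamA \<alpha> \<psi>) p\<bar> + \<bar>pd 2 (GamA \<alpha> \<psi>) p\<bar>)"
      unfolding \<beta> using Gam_bound[OF that(3) \<open>k < 7\<close>] .
    also have "\<dots> \<le> ?r * ?Z + ?J * (3 * KD * ?D)"
    proof (rule add_mono)
      show "?r * (\<bar>Zf 1 (GamA \<alpha> \<psi>) p\<bar> + \<bar>Zf 2 (GamA \<alpha> \<psi>) p\<bar>) \<le> ?r * ?Z"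
        using that(3) Zf_le_ZNormS[OF \<open>\<alpha> \<in> multi s\<close>] by (simp add: mult_left_mono)
      show "?J * (\<bar>pd 0 (GamA \<alpha> \<psi>) p\<bar> + \<bar>pd 1 (GamA \<alpha> \<psi>) p\<bar> + \<bar>pd 2 (GamA \<alpha> \<psi>) p\<bar>)
          \<le> ?J * (3 * KD * ?D)"
        using KD[of 0 \<alpha> \<psi> p] KD[of 1 \<alpha> \<psi> p] KD[of 2 \<alpha> \<psi> p] \<open>\<alpha> \<in> multi s\<close> that(2)
          one_le_jbr[of "tco p - xnorm p"]
        by (intro mult_left_mono) auto
    qed
    also have "\<dots> \<le> M * (?r * ?Z) + M * (?J * ?D)"
    proof (rule add_mono)
      show "?r * ?Z \<le> M * (?r * ?Z)"
        using that(3) ZNormS_nonneg[of s \<psi> p] mult_right_mono[of 1 M "?r * ?Z"] by (simp add: M_def)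
      show "?J * (3 * KD * ?D) \<le> M * (?J * ?D)"
        using one_le_jbr[of "tco p - xnorm p"] DNormS_nonneg[of s \<psi> p]
          mult_right_mono[of "3 * KD" M "?J * ?D"]
        by (simp add: M_def algebra_simps)
    qed
    finally show ?thesis by (simp add: weighted_norm_def distrib_left)
  qed
  then show ?thesis by blast
qed

lemma GamA_Gam_bound:
  assumes "\<alpha> \<in> multi s" "j < 7"
  shows "\<exists>K. \<forall>\<psi> p. smooth3 \<psi> \<and> 0 < xnorm p \<longrightarrow> \<bar>GamA \<alpha> (Gam j \<psi>) p\<bar> \<le> K * weighted_norm s \<psi> p"
proof -
  obtain KB where KB: "\<And>\<beta> \<psi> p. \<beta> \<in> pos_multi (Suc s) \<Longrightarrow> smooth3 \<psi> \<Longrightarrow> 0 < xnorm p \<Longrightarrow>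
      \<bar>GamA \<beta> \<psi> p\<bar> \<le> KB * weighted_norm s \<psi> p"
    using GamA_pos_multi_bound[of s] by blast
  obtain K where "K \<ge> 0" and K: "\<And>\<psi> p. smooth3 \<psi> \<Longrightarrow>
      \<bar>GamA \<alpha> (Gam j \<psi>) p\<bar> \<le> K * (\<Sum>\<beta>\<in>pos_multi (Suc s). \<bar>GamA \<beta> \<psi> p\<bar>)"
    using op_span_bound[OF GamA_Gam_span[OF assms] finite_pos_multi] by blast
  have "\<bar>GamA \<alpha> (Gam j \<psi>) p\<bar> \<le> K * (card (pos_multi (Suc s)) * KB) * weighted_norm s \<psi> p"
    if "smooth3 \<psi>" "0 < xnorm p" for \<psi> p
  proof -
    have "(\<Sum>\<beta>\<in>pos_multi (Suc s). \<bar>GamA \<beta> \<psi> p\<bar>) \<le> (\<Sum>\<beta>\<in>pos_multi (Suc s). KB * weighted_norm s \<psi> p)"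
      using KB that by (intro sum_mono) auto
    then have "K * (\<Sum>\<beta>\<in>pos_multi (Suc s). \<bar>GamA \<beta> \<psi> p\<bar>)
        \<le> K * (card (pos_multi (Suc s)) * (KB * weighted_norm s \<psi> p))"
      using \<open>K \<ge> 0\<close> by (simp add: mult_left_mono)
    with K[OF that(1), of p] show ?thesis by (simp add: mult.assoc)
  qed
  then show ?thesis by blast
qed

lemma GamNormS_bound:
  "\<exists>K. \<forall>\<psi> p. smooth3 \<psi> \<and> 0 < xnorm p \<longrightarrow> GamNormS s \<psi> p \<le> K * weighted_norm s \<psi> p"
proof -
  have "\<exists>K. \<forall>j\<alpha>\<in>{..<7} \<times> multi s. \<forall>\<psi> p. smooth3 \<psi> \<and> 0 < xnorm p \<longrightarrow>
      \<bar>GamA (snd j\<alpha>) (Gam (fst j\<alpha>) \<psi>) p\<bar> \<le> K * weighted_norm s \<psi> p"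
    using finite_multi by (intro finite_uniform_bound weighted_norm_nonneg GamA_Gam_bound) auto
  then obtain K where K: "\<And>j\<alpha> \<psi> p. j\<alpha> \<in> {..<7} \<times> multi s \<Longrightarrow> smooth3 \<psi> \<Longrightarrow> 0 < xnorm p \<Longrightarrow>
      \<bar>GamA (snd j\<alpha>) (Gam (fst j\<alpha>) \<psi>) p\<bar> \<le> K * weighted_norm s \<psi> p"
    by fastforce
  have "GamNormS s \<psi> p \<le> (card ({..<7::nat} \<times> multi s) * K) * weighted_norm s \<psi> p"
    if "smooth3 \<psi>" "0 < xnorm p" for \<psi> p
  proof -
    have "GamNormS s \<psi> p \<le> (\<Sum>j\<alpha>\<in>{..<7::nat} \<times> multi s. K * weighted_norm s \<psi> p)"
      unfolding GamNormS_eq using K that by (intro sum_mono) auto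
    then show ?thesis by simp
  qed
  then show ?thesis by blast
qed

theorem lemma2p6:
  fixes s :: nat
  shows "\<exists>C>0. \<forall>\<psi>. smooth3 \<psi> \<longrightarrow>
           (\<forall>t x1 x2. (x1, x2) \<noteq> (0, 0) \<longrightarrow>
              GamNormS s \<psi> (t, x1, x2)
                \<le> C * xnorm (t, x1, x2) * ZNormS s \<psi> (t, x1, x2)
                  + C * jbr (t - xnorm (t, x1, x2)) * DNormS s \<psi> (t, x1, x2))"
proof -
  obtain K where K: "\<And>\<psi> p. smooth3 \<psi> \<Longrightarrow> 0 < xnorm p \<Longrightarrow> GamNormS s \<psi> p \<le> K * weighted_norm s \<psi> p"
    using GamNormS_bound[of s] by blast
  have "GamNormS s \<psi> p \<le> (\<bar>K\<bar> + 1) * weighted_norm s \<psi> p" if "smooth3 \<psi>" "0 < xnorm p" for \<psi> p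
  proof (rule order_trans[OF K[OF that]])
    show "K * weighted_norm s \<psi> p \<le> (\<bar>K\<bar> + 1) * weighted_norm s \<psi> p"
      by (rule mult_right_mono[OF _ weighted_norm_nonneg]) simp
  qed
  then show ?thesis
    by (intro exI[of _ "\<bar>K\<bar> + 1"]) (auto simp: weighted_norm_def tco_def xnorm_pos algebra_simps)
qed

end
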